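(* Let $\mathbf{C}$ be a category of $\mathbf{FI}$ type, $c$ an object and $V$ a finite-dimensional $G_c$-representation with character $\chi_V$. Then the character of the $\mathbf{C}$-module $\mathrm{Ind}_c(V)$ is $$\chi_{\mathrm{Ind}_c(V)}=\sum_{\mu\in\mathrm{conj}(G_c)}\chi_V(\mu)\binom{X}{\mu},$$ where $\mathrm{conj}(G_c)$ is the set of conjugacy classes of $G_c$ and $\chi_V(\mu)$ is the value of $\chi_V$ on any element of $\mu$. In particular it is a character polynomial of degree $c$.
   Context: A category $\mathbf{C}$ is of $\mathbf{FI}$ type if: (1) all Hom-sets are finite; (2) every morphism is a monomorphism and every endomorphism is an isomorphism; (3) for all objects $c,d$ the group $G_d=\mathrm{Aut}_{\mathbf{C}}(d)$ acts transitively on $\mathrm{Hom}_{\mathbf{C}}(c,d)$; (4) for every $d$ only finitely many isomorphism classes of $c$ have $\mathrm{Hom}(c,d)\neq\emptyset$; (5) every pair $c_1\to d\leftarrow c_2$ has a pullback, and every pair $f_i:p\to c_i$ has a weak push-out, i.e. a commutative pullback square $g_i:c_i\to d$ such that for every other pullback square $h_i:c_i\to z$ with $h_1f_1=h_2f_2$ there is a unique $h:d\to z$ with $hg_i=h_i$. $\mathrm{Ind}_c(V)$ is the $\mathbf{C}$-module $d\mapsto\mathbb{C}[\mathrm{Hom}(c,d)]\otimes_{\mathbb{C}[G_c]}V$ (morphisms act by postcomposition); its character is the collection of characters of the $G_d$-representations $\mathrm{Ind}_c(V)_d$. Binomial set: $\binom{d}{c}=\mathrm{Hom}(c,d)/G_c$.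 For a conjugacy class $\mu\subseteq G_c$, $\binom{X}{\mu}$ is the class function on every $G_d$ given by $\sigma\mapsto\#\{[f]\in\binom{d}{c}:\exists\psi\in\mu,\ \sigma f=f\psi\}$, of degree $c$. Character polynomials are $\mathbb{C}$-linear combinations of these. *)

theory Defs
  imports Complex_Main "HOL-Library.Function_Algebras"
begin

record ('o, 'm) cat =
  Hom  :: "'o \<Rightarrow> 'o \<Rightarrow> 'm set"
  Comp :: "'m \<Rightarrow> 'm \<Rightarrow> 'm"   (* Comp C g f = g \<circ> f *)
  Id   :: "'o \<Rightarrow> 'm"

definition is_category :: "('o, 'm) cat \<Rightarrow> bool" where
  "is_category C \<longleftrightarrow>
     (\<forall>x y z f g. f \<in> Hom C x y \<longrightarrow> g \<in> Hom C y z \<longrightarrow> Comp C g f \<in> Hom C x z) \<and>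
     (\<forall>w x y z f g h. f \<in> Hom C w x \<longrightarrow> g \<in> Hom C x y \<longrightarrow> h \<in> Hom C y z \<longrightarrow>
         Comp C h (Comp C g f) = Comp C (Comp C h g) f) \<and>
     (\<forall>x. Id C x \<in> Hom C x x) \<and>
     (\<forall>x y f. f \<in> Hom C x y \<longrightarrow> Comp C (Id C y) f = f \<and> Comp C f (Id C x) = f) \<and>
     (\<forall>x y x' y'. (x, y) \<noteq> (x', y') \<longrightarrow> Hom C x y \<inter> Hom C x' y' = {})"

definition Aut :: "('o, 'm) cat \<Rightarrow> 'o \<Rightarrow> 'm set" where
  "Aut C d = {f \<in> Hom C d d. \<exists>g \<in> Hom C d d. Comp C g f = Id C d \<and> Comp C f g = Id C d}"

definition cinv :: "('o, 'm) cat \<Rightarrow> 'o \<Rightarrow> 'm \<Rightarrow> 'm" where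
  "cinv C d f = (THE g. g \<in> Hom C d d \<and> Comp C g f = Id C d \<and> Comp C f g = Id C d)"

definition isomorphic :: "('o, 'm) cat \<Rightarrow> 'o \<Rightarrow> 'o \<Rightarrow> bool" where
  "isomorphic C x y \<longleftrightarrow> (\<exists>f \<in> Hom C x y. \<exists>g \<in> Hom C y x.
      Comp C g f = Id C x \<and> Comp C f g = Id C y)"

definition is_pullback :: "('o, 'm) cat \<Rightarrow> 'o \<Rightarrow> 'o \<Rightarrow> 'o \<Rightarrow> 'm \<Rightarrow> 'm \<Rightarrow> 'o \<Rightarrow> 'm \<Rightarrow> 'm \<Rightarrow> bool" where
  "is_pullback C c1 c2 d g1 g2 p f1 f2 \<longleftrightarrow>
     g1 \<in> Hom C c1 d \<and> g2 \<in> Hom C c2 d \<and> f1 \<in> Hom C p c1 \<and> f2 \<in> Hom C p c2 \<and>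
     Comp C g1 f1 = Comp C g2 f2 \<and>
     (\<forall>z h1 h2. h1 \<in> Hom C z c1 \<longrightarrow> h2 \<in> Hom C z c2 \<longrightarrow> Comp C g1 h1 = Comp C g2 h2 \<longrightarrow>
        (\<exists>!h. h \<in> Hom C z p \<and> Comp C f1 h = h1 \<and> Comp C f2 h = h2))"

definition FI_type :: "('o, 'm) cat \<Rightarrow> bool" where
  "FI_type C \<longleftrightarrow> is_category C \<and>
     \<comment> \<open>(1) finite Hom-sets\<close>
     (\<forall>x y. finite (Hom C x y)) \<and>
     \<comment> \<open>(2) monomorphisms; endomorphisms are isomorphisms\<close>
     (\<forall>w x y f g h. f \<in> Hom C x y \<longrightarrow> g \<in> Hom C w x \<longrightarrow> h \<in> Hom C w x \<longrightarrow>
         Comp C f g = Comp C f h \<longrightarrow> g = h) \<and>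
     (\<forall>x. Hom C x x = Aut C x) \<and>
     \<comment> \<open>(3) transitivity of the action of \<open>G_d\<close> on \<open>Hom(c,d)\<close>\<close>
     (\<forall>c d f f'. f \<in> Hom C c d \<longrightarrow> f' \<in> Hom C c d \<longrightarrow> (\<exists>\<sigma> \<in> Aut C d. f' = Comp C \<sigma> f)) \<and>
     \<comment> \<open>(4) finitely many isomorphism classes map into each \<open>d\<close>\<close>
     (\<forall>d. \<exists>S. finite S \<and> (\<forall>c. Hom C c d \<noteq> {} \<longrightarrow> (\<exists>s \<in> S. isomorphic C c s))) \<and>
     \<comment> \<open>(5a) pullbacks\<close>
     (\<forall>c1 c2 d g1 g2. g1 \<in> Hom C c1 d \<longrightarrow> g2 \<in> Hom C c2 d \<longrightarrow>
         (\<exists>p f1 f2. is_pullback C c1 c2 d g1 g2 p f1 f2)) \<and>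
     \<comment> \<open>(5b) weak push-outs\<close>
     (\<forall>p c1 c2 f1 f2. f1 \<in> Hom C p c1 \<longrightarrow> f2 \<in> Hom C p c2 \<longrightarrow>
         (\<exists>d g1 g2. is_pullback C c1 c2 d g1 g2 p f1 f2 \<and>
            (\<forall>z h1 h2. is_pullback C c1 c2 z h1 h2 p f1 f2 \<longrightarrow>
               (\<exists>!h. h \<in> Hom C d z \<and> Comp C h g1 = h1 \<and> Comp C h g2 = h2))))"

text \<open>Vectors of \<open>\<complex>^n\<close> are functions \<open>nat \<Rightarrow> complex\<close> (only indices \<open>< n\<close> matter);
  \<open>\<rho> g i j\<close> is the \<open>(i,j)\<close> entry of the matrix of \<open>g\<close>.\<close>
definition is_matrep :: "('o, 'm) cat \<Rightarrow> 'o \<Rightarrow> nat \<Rightarrow> ('m \<Rightarrow> nat \<Rightarrow> nat \<Rightarrow> complex) \<Rightarrow> bool" where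
  "is_matrep C c n \<rho> \<longleftrightarrow>
     (\<forall>i<n. \<forall>j<n. \<rho> (Id C c) i j = (if i = j then 1 else 0)) \<and>
     (\<forall>g \<in> Aut C c. \<forall>h \<in> Aut C c. \<forall>i<n. \<forall>j<n.
         \<rho> (Comp C g h) i j = (\<Sum>k<n. \<rho> g i k * \<rho> h k j))"

definition rep_char :: "nat \<Rightarrow> ('m \<Rightarrow> nat \<Rightarrow> nat \<Rightarrow> complex) \<Rightarrow> 'm \<Rightarrow> complex" where
  "rep_char n \<rho> g = (\<Sum>i<n. \<rho> g i i)"

definition rep_act :: "nat \<Rightarrow> ('m \<Rightarrow> nat \<Rightarrow> nat \<Rightarrow> complex) \<Rightarrow> 'm \<Rightarrow> (nat \<Rightarrow> complex) \<Rightarrow> (nat \<Rightarrow> complex)" where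
  "rep_act n \<rho> g v = (\<lambda>i. if i < n then (\<Sum>j<n. \<rho> g i j * v j) else 0)"

definition tscale :: "complex \<Rightarrow> ('m \<Rightarrow> nat \<Rightarrow> complex) \<Rightarrow> ('m \<Rightarrow> nat \<Rightarrow> complex)" where
  "tscale a F = (\<lambda>f i. a * F f i)"

text \<open>For a linear map \<open>L\<close> of \<open>W\<close> preserving the subspace \<open>K \<subseteq> W\<close>: choose a basis
  \<open>BK\<close> of \<open>K\<close>, extend it to a basis \<open>B\<close> of \<open>W\<close>; then the images of \<open>B - BK\<close> form a basis
  of \<open>W/K\<close> and the trace of the induced map on \<open>W/K\<close> is the sum of the corresponding
  diagonal coordinates.\<close>
definition quot_trace :: "('m \<Rightarrow> nat \<Rightarrow> complex) set \<Rightarrow> ('m \<Rightarrow> nat \<Rightarrow> complex) set \<Rightarrow>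
    (('m \<Rightarrow> nat \<Rightarrow> complex) \<Rightarrow> ('m \<Rightarrow> nat \<Rightarrow> complex)) \<Rightarrow> complex" where
  "quot_trace W K L =
     (let BK = (SOME B. B \<subseteq> K \<and> \<not> module.dependent tscale B \<and> module.span tscale B = K);
          B  = (SOME B. BK \<subseteq> B \<and> B \<subseteq> W \<and> \<not> module.dependent tscale B \<and> module.span tscale B = W)
      in (\<Sum>b \<in> B - BK. module.representation tscale B (L b) b))"

text \<open>\<open>\<complex>[Hom(c,d)] \<otimes>\<^sub>\<complex> \<complex>^n\<close> is realised as functions \<open>F :: 'm \<Rightarrow> nat \<Rightarrow> complex\<close>
  supported on \<open>Hom(c,d) \<times> {..<n}\<close>; \<open>tens f v\<close> is the pure tensor \<open>f \<otimes> v\<close>.\<close>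
definition tens :: "nat \<Rightarrow> 'm \<Rightarrow> (nat \<Rightarrow> complex) \<Rightarrow> ('m \<Rightarrow> nat \<Rightarrow> complex)" where
  "tens n f v = (\<lambda>f' i. if f' = f \<and> i < n then v i else 0)"

definition tensor_space :: "('o, 'm) cat \<Rightarrow> 'o \<Rightarrow> nat \<Rightarrow> 'o \<Rightarrow> ('m \<Rightarrow> nat \<Rightarrow> complex) set" where
  "tensor_space C c n d = {F. \<forall>f i. F f i \<noteq> 0 \<longrightarrow> f \<in> Hom C c d \<and> i < n}"

text \<open>The relations defining \<open>\<otimes>\<^bsub>\<complex>[G_c]\<^esub>\<close>: \<open>(f \<circ> g) \<otimes> v = f \<otimes> g v\<close>.\<close>
definition balance_space :: "('o, 'm) cat \<Rightarrow> 'o \<Rightarrow> nat \<Rightarrow> ('m \<Rightarrow> nat \<Rightarrow> nat \<Rightarrow> complex) \<Rightarrow> 'o \<Rightarrow>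
    ('m \<Rightarrow> nat \<Rightarrow> complex) set" where
  "balance_space C c n \<rho> d = module.span tscale
     {(\<lambda>f' i. tens n (Comp C f g) v f' i - tens n f (rep_act n \<rho> g v) f' i) | f g v.
        f \<in> Hom C c d \<and> g \<in> Aut C c}"

text \<open>Action of \<open>\<sigma> \<in> G_d\<close> by postcomposition: \<open>\<sigma> (f \<otimes> v) = (\<sigma> \<circ> f) \<otimes> v\<close>.\<close>
definition post_act :: "('o, 'm) cat \<Rightarrow> 'o \<Rightarrow> 'o \<Rightarrow> 'm \<Rightarrow> ('m \<Rightarrow> nat \<Rightarrow> complex) \<Rightarrow> ('m \<Rightarrow> nat \<Rightarrow> complex)" where
  "post_act C c d \<sigma> F = (\<lambda>f' i. if f' \<in> Hom C c d then F (Comp C (cinv C d \<sigma>) f') i else 0)"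

text \<open>Character of the \<open>G_d\<close>-representation \<open>Ind_c(V)_d = \<complex>[Hom(c,d)] \<otimes>\<^bsub>\<complex>[G_c]\<^esub> V\<close> at \<open>\<sigma>\<close>.\<close>
definition Ind_char :: "('o, 'm) cat \<Rightarrow> 'o \<Rightarrow> nat \<Rightarrow> ('m \<Rightarrow> nat \<Rightarrow> nat \<Rightarrow> complex) \<Rightarrow> 'o \<Rightarrow> 'm \<Rightarrow> complex" where
  "Ind_char C c n \<rho> d \<sigma> =
     quot_trace (tensor_space C c n d) (balance_space C c n \<rho> d) (post_act C c d \<sigma>)"

definition binom_set :: "('o, 'm) cat \<Rightarrow> 'o \<Rightarrow> 'o \<Rightarrow> 'm set set" where
  "binom_set C c d = (\<lambda>f. (\<lambda>g. Comp C f g) ` Aut C c) ` Hom C c d"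

definition conj_classes :: "('o, 'm) cat \<Rightarrow> 'o \<Rightarrow> 'm set set" where
  "conj_classes C c = (\<lambda>g. {Comp C (Comp C h g) (cinv C c h) | h. h \<in> Aut C c}) ` Aut C c"

definition binomX :: "('o, 'm) cat \<Rightarrow> 'o \<Rightarrow> 'm set \<Rightarrow> 'o \<Rightarrow> 'm \<Rightarrow> nat" where
  "binomX C c \<mu> d \<sigma> = card {Ob \<in> binom_set C c d. \<exists>f \<in> Ob. \<exists>\<psi> \<in> \<mu>. Comp C \<sigma> f = Comp C f \<psi>}"

definition class_val :: "nat \<Rightarrow> ('m \<Rightarrow> nat \<Rightarrow> nat \<Rightarrow> complex) \<Rightarrow> 'm set \<Rightarrow> complex" where
  "class_val n \<rho> \<mu> = rep_char n \<rho> (SOME g. g \<in> \<mu>)"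

end

theory Submission
  imports Defs
begin

text \<open>Pick a representative \<open>r\<^sub>O\<close> in every \<open>G\<^sub>c\<close>-orbit \<open>O\<close> of \<open>Hom(c,d)\<close>. As morphisms
  are monic, every \<open>f : c \<rightarrow> d\<close> is uniquely \<open>r\<^sub>O \<circ> g\<close> with \<open>g \<in> G\<^sub>c\<close>. Hence the vectors
  \<open>r\<^sub>O \<otimes> e\<^sub>i\<close> together with the balancing vectors \<open>r\<^sub>O g \<otimes> e\<^sub>i - r\<^sub>O \<otimes> g e\<^sub>i\<close> (\<open>g \<noteq> 1\<close>)
  form a basis of \<open>\<complex>[Hom(c,d)] \<otimes> V\<close>, the latter spanning the relations \<open>K\<close> defining
  \<open>\<otimes>\<^bsub>\<complex>[G\<^sub>c]\<^esub>\<close>; so the classes of the \<open>r\<^sub>O \<otimes> e\<^sub>i\<close> form a basis of \<open>Ind\<^sub>c(V)\<^sub>d\<close>.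
  If \<open>\<sigma> r\<^sub>O = r\<^sub>O\<^sub>' h\<close> then \<open>\<sigma>(r\<^sub>O \<otimes> e\<^sub>i) \<equiv> r\<^sub>O\<^sub>' \<otimes> h e\<^sub>i\<close> modulo \<open>K\<close>, so only the orbits
  fixed by \<open>\<sigma>\<close> contribute to the trace, each with \<open>\<chi>\<^sub>V(h)\<close>. Finally \<open>O\<close> is counted by
  \<open>binom X \<mu>\<close> exactly when it is fixed by \<open>\<sigma>\<close> with twist \<open>h \<in> \<mu>\<close>, which regroups the
  trace as \<open>\<Sum>\<^sub>\<mu> \<chi>\<^sub>V(\<mu>) binom X \<mu>\<close>.\<close>

lemma sum_eq_single:
  assumes "finite A" "x \<in> A" "\<And>y. y \<in> A \<Longrightarrow> y \<noteq> x \<Longrightarrow> F y = 0"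
  shows "sum F A = F x"
  using sum.mono_neutral_right[of A "{x}" F] assms by auto

lemma sum_mult_delta:
  "finite S \<Longrightarrow> (\<Sum>k\<in>S. a k * (if k = j then 1 else 0)) = (if j \<in> S then a j else (0::'a::semiring_1))"
  by (simp add: if_distrib cong: if_cong)

context vector_space begin

lemma trace_independent_of_basis:
  assumes fB: "finite B" and fB': "finite B'" and iB: "independent B" and iB': "independent B'"
    and sp: "span B = span B'"
    and hom: "module_hom scale scale L" and inv: "L ` span B \<subseteq> span B"
  shows "(\<Sum>b\<in>B. representation B (L b) b) = (\<Sum>b\<in>B'. representation B' (L b) b)"
proof -
  have Lsp: "L x \<in> span B" if "x \<in> span B" for x using inv that by auto
  have B'sp: "b \<in> span B" if "b \<in> B'" for b using that span_base sp by auto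
  have Bsp': "b \<in> span B'" if "b \<in> B" for b using that span_base sp by auto
  have "(\<Sum>b\<in>B. representation B (L b) b)
      = (\<Sum>b\<in>B. \<Sum>b'\<in>B'. representation B' b b' * representation B (L b') b)"
  proof (rule sum.cong[OF refl])
    fix b assume b: "b \<in> B"
    have "L b = L (\<Sum>b'\<in>B'. representation B' b b' *s b')"
      using sum_representation_eq[OF iB' Bsp'[OF b] fB'] by simp
    also have "\<dots> = (\<Sum>b'\<in>B'. representation B' b b' *s L b')"
      by (simp add: module_hom.sum[OF hom] module_hom.scale[OF hom])
    finally have "representation B (L b) = (\<lambda>x. \<Sum>b'\<in>B'. representation B (representation B' b b' *s L b') x)"
      by (simp add: representation_sum[OF iB] B'sp Lsp span_scale)
    then show "representation B (L b) b = (\<Sum>b'\<in>B'. representation B' b b' * representation B (L b') b)"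
      using representation_scale[OF iB] B'sp Lsp by simp
  qed
  also have "\<dots> = (\<Sum>b'\<in>B'. \<Sum>b\<in>B. representation B (L b') b * representation B' b b')"
    by (subst sum.swap) (simp add: mult.commute)
  also have "\<dots> = (\<Sum>b'\<in>B'. representation B' (L b') b')"
  proof (rule sum.cong[OF refl])
    fix b' assume b': "b' \<in> B'"
    have "representation B' (L b') = representation B' (\<Sum>b\<in>B. representation B (L b') b *s b)"
      using sum_representation_eq[OF iB Lsp[OF B'sp[OF b']] fB] by simp
    also have "\<dots> = (\<lambda>x. \<Sum>b\<in>B. representation B (L b') b * representation B' b x)"
      by (simp add: representation_sum[OF iB'] representation_scale[OF iB'] Bsp' span_scale)
    finally show "(\<Sum>b\<in>B. representation B (L b') b * representation B' b b') = representation B' (L b') b'"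
      by simp
  qed
  finally show ?thesis .
qed

text \<open>The bases chosen with \<open>SOME\<close> are immaterial: the trace on \<open>W/K\<close> is the difference
  of the (basis-independent) traces on \<open>W\<close> and on \<open>K\<close>.\<close>
lemma quotient_trace_eq_diagonal_sum:
  assumes fin: "finite B0" and iB0: "independent B0" and sub: "BK0 \<subseteq> B0"
    and spK: "span BK0 = K" and spW: "span B0 = W"
    and hom: "module_hom scale scale L" and LW: "L ` W \<subseteq> W" and LK: "L ` K \<subseteq> K"
  shows "(let BK = (SOME B. B \<subseteq> K \<and> \<not> dependent B \<and> span B = K);
          B  = (SOME B. BK \<subseteq> B \<and> B \<subseteq> W \<and> \<not> dependent B \<and> span B = W)
      in (\<Sum>b \<in> B - BK. representation B (L b) b)) = (\<Sum>b \<in> B0 - BK0. representation B0 (L b) b)"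
proof -
  define BK where "BK = (SOME B. B \<subseteq> K \<and> \<not> dependent B \<and> span B = K)"
  define B where "B = (SOME B. BK \<subseteq> B \<and> B \<subseteq> W \<and> \<not> dependent B \<and> span B = W)"
  have iBK0: "independent BK0" using iB0 sub independent_mono by auto
  have "\<exists>B. B \<subseteq> K \<and> \<not> dependent B \<and> span B = K"
    using iBK0 spK span_superset by blast
  hence BK: "BK \<subseteq> K" "independent BK" "span BK = K"
    unfolding BK_def by (metis (mono_tags, lifting) someI_ex)+
  have KW: "K \<subseteq> W" using spK spW sub span_mono by auto
  obtain B' where B': "BK \<subseteq> B'" "B' \<subseteq> W" "independent B'" "W \<subseteq> span B'"
    using maximal_independent_subset_extend[of BK W] BK KW by blast
  have "span B' \<subseteq> W" using B'(2) spW by (metis span_mono span_span)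
  hence "\<exists>B. BK \<subseteq> B \<and> B \<subseteq> W \<and> \<not> dependent B \<and> span B = W" using B' by blast
  hence B: "BK \<subseteq> B" "B \<subseteq> W" "independent B" "span B = W"
    unfolding B_def by (metis (mono_tags, lifting) someI_ex)+
  have fB: "finite B" using independent_span_bound[OF fin B(3)] B(2) spW by auto
  have fBK: "finite BK" using fB B(1) finite_subset by auto
  have fBK0: "finite BK0" using fin sub finite_subset by auto
  have trace_split: "(\<Sum>b \<in> A - A'. representation A (L b) b)
      = (\<Sum>b\<in>A. representation A (L b) b) - (\<Sum>b\<in>A'. representation A' (L b) b)"
    if "finite A" "independent A" "A' \<subseteq> A" "span A' = K" for A A'
  proof -
    have "(\<Sum>b\<in>A'. representation A (L b) b) = (\<Sum>b\<in>A'. representation A' (L b) b)"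
    proof (rule sum.cong[OF refl])
      fix b assume "b \<in> A'"
      then have "L b \<in> span A'" using LK span_base that(4) by blast
      then show "representation A (L b) b = representation A' (L b) b"
        using representation_extend[OF that(2) _ that(3)] by simp
    qed
    thus ?thesis using sum_diff[OF that(1,3), of "\<lambda>b. representation A (L b) b"] by (simp only:)
  qed
  have "(\<Sum>b \<in> B - BK. representation B (L b) b)
      = (\<Sum>b\<in>B. representation B (L b) b) - (\<Sum>b\<in>BK. representation BK (L b) b)"
    using trace_split[OF fB B(3,1) BK(3)] .
  also have "(\<Sum>b\<in>B. representation B (L b) b) = (\<Sum>b\<in>B0. representation B0 (L b) b)"
    by (rule trace_independent_of_basis[OF fB fin B(3) iB0 _ hom]) (use B spW LW in auto)
  also have "(\<Sum>b\<in>BK. representation BK (L b) b) = (\<Sum>b\<in>BK0. representation BK0 (L b) b)"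
    by (rule trace_independent_of_basis[OF fBK fBK0 BK(2) iBK0 _ hom]) (use BK spK LK in auto)
  also have "(\<Sum>b\<in>B0. representation B0 (L b) b) - (\<Sum>b\<in>BK0. representation BK0 (L b) b)
     = (\<Sum>b \<in> B0 - BK0. representation B0 (L b) b)"
    using trace_split[OF fin iB0 sub spK] by simp
  finally show ?thesis unfolding BK_def[symmetric] B_def[symmetric] Let_def by simp
qed

end

interpretation tscale: vector_space tscale
  unfolding vector_space_def module_def by (auto simp: tscale_def fun_eq_iff algebra_simps)

lemma tens_apply: "tens n f v f' i = (if f' = f \<and> i < n then v i else 0)"
  by (simp add: tens_def)

lemma tscale_apply: "tscale a F f' i = a * F f' i"
  by (simp add: tscale_def)

lemma sum_fun_apply2: "(\<Sum>x\<in>A. F x) f' i = (\<Sum>x\<in>A. F x f' i)"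
  by (induct A rule: infinite_finite_induct) auto

locale FI_category =
  fixes C :: "('o, 'm) cat"
  assumes FI: "FI_type C"
begin

lemma category: "is_category C"
  using FI unfolding FI_type_def by (rule conjunct1)

lemma comp_closed [intro]: "f \<in> Hom C x y \<Longrightarrow> g \<in> Hom C y z \<Longrightarrow> Comp C g f \<in> Hom C x z"
  using category unfolding is_category_def by simp

lemma comp_assoc: "f \<in> Hom C w x \<Longrightarrow> g \<in> Hom C x y \<Longrightarrow> h \<in> Hom C y z \<Longrightarrow>
    Comp C h (Comp C g f) = Comp C (Comp C h g) f"
  using category unfolding is_category_def by simp

lemma Id_closed [simp, intro]: "Id C x \<in> Hom C x x"
  using category unfolding is_category_def by simp

lemma Id_left [simp]: "f \<in> Hom C x y \<Longrightarrow> Comp C (Id C y) f = f"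
  using category unfolding is_category_def by simp

lemma Id_right [simp]: "f \<in> Hom C x y \<Longrightarrow> Comp C f (Id C x) = f"
  using category unfolding is_category_def by simp

lemma mono_cancel:
  "f \<in> Hom C x y \<Longrightarrow> g \<in> Hom C w x \<Longrightarrow> h \<in> Hom C w x \<Longrightarrow> Comp C f g = Comp C f h \<Longrightarrow> g = h"
  using FI unfolding FI_type_def by metis

lemma Aut_eq_Hom: "Aut C x = Hom C x x"
  using FI unfolding FI_type_def by metis

lemma finite_Hom [simp]: "finite (Hom C x y)"
  using FI unfolding FI_type_def by metis
lemma cinv_spec:
  assumes f: "f \<in> Hom C x x"
  shows "cinv C x f \<in> Hom C x x \<and> Comp C (cinv C x f) f = Id C x \<and> Comp C f (cinv C x f) = Id C x"
proof -
  have "f \<in> Aut C x" using f Aut_eq_Hom by simp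
  then obtain g where g: "g \<in> Hom C x x" "Comp C g f = Id C x" "Comp C f g = Id C x"
    unfolding Aut_def by blast
  have uniq: "g' = g" if "g' \<in> Hom C x x" "Comp C g' f = Id C x" for g'
  proof -
    have "g' = Comp C g' (Comp C f g)" using that g by simp
    also have "\<dots> = g" using comp_assoc[OF g(1) f that(1)] that g by simp
    finally show ?thesis .
  qed
  have "cinv C x f = g"
    unfolding cinv_def by (rule the_equality) (use g uniq in blast)+
  then show ?thesis using g by simp
qed

lemma cinv_closed [simp, intro]: "f \<in> Hom C x x \<Longrightarrow> cinv C x f \<in> Hom C x x"
  using cinv_spec by blast

lemma cinv_left [simp]: "f \<in> Hom C x x \<Longrightarrow> Comp C (cinv C x f) f = Id C x"
  using cinv_spec by blast

lemma cinv_right [simp]: "f \<in> Hom C x x \<Longrightarrow> Comp C f (cinv C x f) = Id C x"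
  using cinv_spec by blast

lemma cinv_unique:
  assumes f: "f \<in> Hom C x x" and g: "g \<in> Hom C x x" and gf: "Comp C g f = Id C x"
  shows "cinv C x f = g"
proof -
  have "g = Comp C g (Comp C f (cinv C x f))" using g f by simp
  also have "\<dots> = cinv C x f" using comp_assoc[OF cinv_closed[OF f] f g] f gf cinv_closed[OF f] by simp
  finally show ?thesis by simp
qed

lemma cinv_comp:
  assumes h: "h \<in> Hom C x x" and k: "k \<in> Hom C x x"
  shows "cinv C x (Comp C h k) = Comp C (cinv C x k) (cinv C x h)"
proof (rule cinv_unique)
  have "Comp C (Comp C (cinv C x k) (cinv C x h)) (Comp C h k)
      = Comp C (cinv C x k) (Comp C (cinv C x h) (Comp C h k))"
    using comp_assoc[of "Comp C h k" x x "cinv C x h" x "cinv C x k" x] assms comp_closed by simp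
  also have "Comp C (cinv C x h) (Comp C h k) = k"
    using comp_assoc[OF k h cinv_closed[OF h]] assms by simp
  finally show "Comp C (Comp C (cinv C x k) (cinv C x h)) (Comp C h k) = Id C x"
    using k by simp
qed (use assms in auto)

lemma comp_endo_closed [simp]: "r \<in> Hom C x y \<Longrightarrow> b \<in> Hom C x x \<Longrightarrow> Comp C r b \<in> Hom C x y"
  by (rule comp_closed)

lemma endo_comp_closed [simp]: "s \<in> Hom C y y \<Longrightarrow> r \<in> Hom C x y \<Longrightarrow> Comp C s r \<in> Hom C x y"
  by (rule comp_closed)

lemma cinv_comp_cancel: "s \<in> Hom C y y \<Longrightarrow> r \<in> Hom C x y \<Longrightarrow> Comp C (cinv C y s) (Comp C s r) = r"
  using comp_assoc[of r x y s y "cinv C y s" y] by simp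

lemma comp_cinv_cancel: "s \<in> Hom C y y \<Longrightarrow> r \<in> Hom C x y \<Longrightarrow> Comp C s (Comp C (cinv C y s) r) = r"
  using comp_assoc[of r x y "cinv C y s" y s y] by simp

lemma comp_comp_cinv: "r \<in> Hom C x y \<Longrightarrow> h \<in> Hom C x x \<Longrightarrow> Comp C (Comp C r h) (cinv C x h) = r"
  using comp_assoc[of "cinv C x h" x x h x r y] by simp

lemma comp_cinv_comp: "r \<in> Hom C x y \<Longrightarrow> h \<in> Hom C x x \<Longrightarrow> Comp C (Comp C r (cinv C x h)) h = r"
  using comp_assoc[of h x x "cinv C x h" x r y] by simp

lemma cinv_Id [simp]: "cinv C x (Id C x) = Id C x"
  by (rule cinv_unique) (simp_all add: Id_left[OF Id_closed])

end

text \<open>Instances of associativity and cancellation at fixed objects: only with the objects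
  fixed can the simplifier discharge the typing premises.\<close>
locale FI_object = FI_category C for C :: "('o, 'm) cat" +
  fixes c :: 'o
begin

lemma endo_assoc [simp]: "a \<in> Hom C c c \<Longrightarrow> b \<in> Hom C c c \<Longrightarrow> e \<in> Hom C c c \<Longrightarrow>
    Comp C a (Comp C b e) = Comp C (Comp C a b) e"
  by (rule comp_assoc)

lemma endo_comp_cinv [simp]: "a \<in> Hom C c c \<Longrightarrow> h \<in> Hom C c c \<Longrightarrow> Comp C (Comp C a h) (cinv C c h) = a"
  by (rule comp_comp_cinv)

lemma endo_cinv_comp [simp]: "a \<in> Hom C c c \<Longrightarrow> h \<in> Hom C c c \<Longrightarrow> Comp C (Comp C a (cinv C c h)) h = a"
  by (rule comp_cinv_comp)

end

locale FI_orbits = FI_object C c for C :: "('o, 'm) cat" and c :: 'o +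
  fixes d :: 'o
begin

lemma hom_assoc [simp]: "r \<in> Hom C c d \<Longrightarrow> b \<in> Hom C c c \<Longrightarrow> e \<in> Hom C c c \<Longrightarrow>
    Comp C r (Comp C b e) = Comp C (Comp C r b) e"
  by (rule comp_assoc)

lemma hom_comp_cinv [simp]: "r \<in> Hom C c d \<Longrightarrow> h \<in> Hom C c c \<Longrightarrow> Comp C (Comp C r h) (cinv C c h) = r"
  by (rule comp_comp_cinv)

definition orbit :: "'m \<Rightarrow> 'm set" where
  "orbit f = (\<lambda>g. Comp C f g) ` Hom C c c"

definition orbit_rep :: "'m set \<Rightarrow> 'm" where
  "orbit_rep Ob = (SOME f. f \<in> Ob)"

lemma binom_set_eq: "binom_set C c d = orbit ` Hom C c d"
  by (simp add: binom_set_def orbit_def Aut_eq_Hom)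

lemma finite_binom_set [simp]: "finite (binom_set C c d)"
  by (simp add: binom_set_eq)

lemma orbit_self: "f \<in> Hom C c d \<Longrightarrow> f \<in> orbit f"
  unfolding orbit_def by (rule image_eqI[of _ _ "Id C c"]) auto

lemma orbit_comp:
  assumes f: "f \<in> Hom C c d" and g: "g \<in> Hom C c c"
  shows "orbit (Comp C f g) = orbit f"
proof
  show "orbit (Comp C f g) \<subseteq> orbit f"
  proof
    fix x assume "x \<in> orbit (Comp C f g)"
    then obtain h where h: "h \<in> Hom C c c" "x = Comp C (Comp C f g) h" unfolding orbit_def by auto
    then have "x = Comp C f (Comp C g h)" using f g by simp
    then show "x \<in> orbit f" unfolding orbit_def using h g by auto
  qed
  show "orbit f \<subseteq> orbit (Comp C f g)"
  proof
    fix x assume "x \<in> orbit f"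
    then obtain h where h: "h \<in> Hom C c c" "x = Comp C f h" unfolding orbit_def by auto
    then have "x = Comp C (Comp C f g) (Comp C (cinv C c g) h)"
      using f g by simp
    then show "x \<in> orbit (Comp C f g)" unfolding orbit_def using h g by auto
  qed
qed

lemma orbit_rep:
  assumes "Ob \<in> binom_set C c d"
  shows "orbit_rep Ob \<in> Ob" "orbit_rep Ob \<in> Hom C c d" "Ob = orbit (orbit_rep Ob)"
proof -
  obtain f where f: "f \<in> Hom C c d" "Ob = orbit f" using assms binom_set_eq by auto
  then show "orbit_rep Ob \<in> Ob" unfolding orbit_rep_def using orbit_self by (metis someI)
  then obtain g where g: "g \<in> Hom C c c" "orbit_rep Ob = Comp C f g" using f unfolding orbit_def by auto
  show "orbit_rep Ob \<in> Hom C c d" using g f by simp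
  show "Ob = orbit (orbit_rep Ob)" using g f orbit_comp by simp
qed

text \<open>\<open>Hom(c,d) \<cong> binom_set C c d \<times> G\<^sub>c\<close>; uniqueness of the \<open>G\<^sub>c\<close>-component is where
  monicity enters.\<close>
lemma Hom_decomp:
  assumes f: "f \<in> Hom C c d"
  shows "\<exists>Ob \<in> binom_set C c d. \<exists>g \<in> Hom C c c. f = Comp C (orbit_rep Ob) g"
proof -
  have Ob: "orbit f \<in> binom_set C c d" using f binom_set_eq by auto
  have "f \<in> orbit (orbit_rep (orbit f))" using orbit_rep(3)[OF Ob] orbit_self[OF f] by simp
  then show ?thesis using Ob unfolding orbit_def by auto
qed

lemma Hom_decomp_unique:
  assumes Ob: "Ob \<in> binom_set C c d" and Ob': "Ob' \<in> binom_set C c d"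
    and g: "g \<in> Hom C c c" and g': "g' \<in> Hom C c c"
    and eq: "Comp C (orbit_rep Ob) g = Comp C (orbit_rep Ob') g'"
  shows "Ob = Ob'" "g = g'"
proof -
  have "Ob = orbit (Comp C (orbit_rep Ob) g)" using orbit_rep[OF Ob] orbit_comp g by simp
  also have "\<dots> = Ob'" using eq orbit_rep[OF Ob'] orbit_comp g' by simp
  finally show "Ob = Ob'" .
  then show "g = g'" using mono_cancel[OF orbit_rep(2)[OF Ob] g g'] eq by simp
qed

lemma orbit_rep_inj:
  "Ob \<in> binom_set C c d \<Longrightarrow> Ob' \<in> binom_set C c d \<Longrightarrow> orbit_rep Ob = orbit_rep Ob' \<Longrightarrow> Ob = Ob'"
  using Hom_decomp_unique(1)[OF _ _ Id_closed Id_closed] orbit_rep(2) by simp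

lemma comp_orbit_rep_ne_rep:
  assumes Ob: "Ob \<in> binom_set C c d" and Ob': "Ob' \<in> binom_set C c d"
    and g: "g \<in> Hom C c c" and gn: "g \<noteq> Id C c"
  shows "Comp C (orbit_rep Ob) g \<noteq> orbit_rep Ob'"
  using Hom_decomp_unique(2)[OF Ob Ob' g Id_closed] orbit_rep(2)[OF Ob'] gn by auto

end

locale FI_matrep = FI_object C c for C :: "('o, 'm) cat" and c :: 'o +
  fixes n :: nat and \<rho> :: "'m \<Rightarrow> nat \<Rightarrow> nat \<Rightarrow> complex"
  assumes matrep: "is_matrep C c n \<rho>"
begin

lemma rho_comp: "g \<in> Hom C c c \<Longrightarrow> h \<in> Hom C c c \<Longrightarrow> i < n \<Longrightarrow> j < n \<Longrightarrow>
    \<rho> (Comp C g h) i j = (\<Sum>k<n. \<rho> g i k * \<rho> h k j)"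
  using matrep Aut_eq_Hom unfolding is_matrep_def by blast

lemma rho_Id: "i < n \<Longrightarrow> j < n \<Longrightarrow> \<rho> (Id C c) i j = (if i = j then 1 else 0)"
  using matrep unfolding is_matrep_def by blast

lemma rep_act_comp:
  assumes h: "h \<in> Hom C c c" and g: "g \<in> Hom C c c" and i: "i < n"
  shows "rep_act n \<rho> (Comp C h g) v i = rep_act n \<rho> h (rep_act n \<rho> g v) i"
proof -
  have "rep_act n \<rho> (Comp C h g) v i = (\<Sum>j<n. (\<Sum>k<n. \<rho> h i k * \<rho> g k j) * v j)"
    unfolding rep_act_def using i rho_comp[OF h g i] by simp
  also have "\<dots> = (\<Sum>k<n. \<Sum>j<n. \<rho> h i k * (\<rho> g k j * v j))"
    by (simp add: sum_distrib_right sum_distrib_left mult.assoc) (rule sum.swap)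
  also have "\<dots> = rep_act n \<rho> h (rep_act n \<rho> g v) i"
    using i by (simp add: rep_act_def sum_distrib_left)
  finally show ?thesis .
qed

lemma rep_act_Id: "i < n \<Longrightarrow> rep_act n \<rho> (Id C c) v i = v i"
  unfolding rep_act_def using rho_Id sum_mult_delta[of "{..<n}" v i]
  by (simp add: eq_commute[of i] mult.commute)

lemma rep_char_conj:
  assumes a: "a \<in> Hom C c c" and k: "k \<in> Hom C c c"
  shows "rep_char n \<rho> (Comp C (Comp C k a) (cinv C c k)) = rep_char n \<rho> a"
proof -
  have "rep_char n \<rho> (Comp C (Comp C k a) (cinv C c k))
      = (\<Sum>i<n. \<Sum>j<n. \<rho> (Comp C k a) i j * \<rho> (cinv C c k) j i)"
    unfolding rep_char_def using rho_comp[of "Comp C k a" "cinv C c k"] a k by simp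
  also have "\<dots> = (\<Sum>j<n. \<Sum>i<n. \<rho> (cinv C c k) j i * \<rho> (Comp C k a) i j)"
    by (subst sum.swap) (simp add: mult.commute)
  also have "\<dots> = (\<Sum>j<n. \<rho> (Comp C (cinv C c k) (Comp C k a)) j j)"
    using rho_comp[of "cinv C c k" "Comp C k a"] a k by simp
  also have "Comp C (cinv C c k) (Comp C k a) = a"
    using a k by simp
  finally show ?thesis unfolding rep_char_def .
qed

definition conj_class :: "'m \<Rightarrow> 'm set" where
  "conj_class a = {Comp C (Comp C h a) (cinv C c h) | h. h \<in> Hom C c c}"

lemma conj_classes_eq: "conj_classes C c = conj_class ` Hom C c c"
  unfolding conj_classes_def conj_class_def Aut_eq_Hom by simp

lemma finite_conj_classes: "finite (conj_classes C c)"
  by (simp add: conj_classes_eq)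

lemma conj_class_subset: "a \<in> Hom C c c \<Longrightarrow> conj_class a \<subseteq> Hom C c c"
  unfolding conj_class_def by auto

lemma conj_class_self: "a \<in> Hom C c c \<Longrightarrow> a \<in> conj_class a"
  unfolding conj_class_def by (rule CollectI, rule exI[of _ "Id C c"]) simp

lemma conj_class_eq:
  assumes a: "a \<in> Hom C c c" and x: "x \<in> conj_class a"
  shows "conj_class x = conj_class a"
proof -
  obtain k where k: "k \<in> Hom C c c" "x = Comp C (Comp C k a) (cinv C c k)"
    using x unfolding conj_class_def by auto
  show ?thesis
  proof
    show "conj_class x \<subseteq> conj_class a"
    proof
      fix y assume "y \<in> conj_class x"
      then obtain h where h: "h \<in> Hom C c c" "y = Comp C (Comp C h x) (cinv C c h)"
        unfolding conj_class_def by auto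
      then have "y = Comp C (Comp C (Comp C h k) a) (cinv C c (Comp C h k))"
        using k a by (simp add: cinv_comp)
      then show "y \<in> conj_class a" unfolding conj_class_def using h k by auto
    qed
    show "conj_class a \<subseteq> conj_class x"
    proof
      fix y assume "y \<in> conj_class a"
      then obtain h where h: "h \<in> Hom C c c" "y = Comp C (Comp C h a) (cinv C c h)"
        unfolding conj_class_def by auto
      then have "y = Comp C (Comp C (Comp C h (cinv C c k)) x) (cinv C c (Comp C h (cinv C c k)))"
        using k a by (simp add: cinv_comp)
      then show "y \<in> conj_class x" unfolding conj_class_def using h k by auto
    qed
  qed
qed

lemma class_val_conj_class:
  assumes a: "a \<in> Hom C c c"
  shows "class_val n \<rho> (conj_class a) = rep_char n \<rho> a"
proof -
  have "(SOME g. g \<in> conj_class a) \<in> conj_class a" using conj_class_self[OF a] by (rule someI)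
  then obtain k where "k \<in> Hom C c c" "(SOME g. g \<in> conj_class a) = Comp C (Comp C k a) (cinv C c k)"
    unfolding conj_class_def by auto
  then show ?thesis unfolding class_val_def using rep_char_conj[OF a] by simp
qed

end

locale FI_tensor = FI_orbits C c d + FI_matrep C c n \<rho>
  for C :: "('o, 'm) cat" and c d :: 'o and n :: nat and \<rho> :: "'m \<Rightarrow> nat \<Rightarrow> nat \<Rightarrow> complex"
begin

abbreviation "W \<equiv> tensor_space C c n d"
abbreviation "K \<equiv> balance_space C c n \<rho> d"

definition unit_vec :: "nat \<Rightarrow> nat \<Rightarrow> complex" where
  "unit_vec i = (\<lambda>j. if j = i then 1 else 0)"

definition tens_basis :: "'m \<Rightarrow> nat \<Rightarrow> 'm \<Rightarrow> nat \<Rightarrow> complex" where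
  "tens_basis f i = tens n f (unit_vec i)"

definition balance_rel :: "'m \<Rightarrow> 'm \<Rightarrow> (nat \<Rightarrow> complex) \<Rightarrow> 'm \<Rightarrow> nat \<Rightarrow> complex" where
  "balance_rel f g v = tens n (Comp C f g) v - tens n f (rep_act n \<rho> g v)"

definition balance_vec :: "'m \<Rightarrow> 'm \<Rightarrow> nat \<Rightarrow> 'm \<Rightarrow> nat \<Rightarrow> complex" where
  "balance_vec f g i = balance_rel f g (unit_vec i)"

definition rep_basis :: "('m \<Rightarrow> nat \<Rightarrow> complex) set" where
  "rep_basis = (\<lambda>(Ob, i). tens_basis (orbit_rep Ob) i) ` (binom_set C c d \<times> {..<n})"

definition balance_basis :: "('m \<Rightarrow> nat \<Rightarrow> complex) set" where
  "balance_basis = (\<lambda>(Ob, g, i). balance_vec (orbit_rep Ob) g i) `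
     (binom_set C c d \<times> (Hom C c c - {Id C c}) \<times> {..<n})"

definition tensor_basis :: "('m \<Rightarrow> nat \<Rightarrow> complex) set" where
  "tensor_basis = balance_basis \<union> rep_basis"

lemma tens_basis_apply: "tens_basis f j f' i = (if f' = f \<and> i < n \<and> i = j then 1 else 0)"
  unfolding tens_basis_def unit_vec_def by (simp add: tens_apply)

lemma rep_act_unit_vec: "i < n \<Longrightarrow> j < n \<Longrightarrow> rep_act n \<rho> g (unit_vec j) i = \<rho> g i j"
  unfolding rep_act_def unit_vec_def using sum_mult_delta[of "{..<n}" "\<lambda>k. \<rho> g i k" j] by simp

lemma balance_vec_apply:
  "balance_vec f g j f' i = (if f' = Comp C f g \<and> i < n \<and> i = j then 1 else 0)
     - (if f' = f \<and> i < n then rep_act n \<rho> g (unit_vec j) i else 0)"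
  unfolding balance_vec_def balance_rel_def unit_vec_def by (simp add: tens_apply)

lemma tens_basis_inj: "i < n \<Longrightarrow> tens_basis f i = tens_basis f' j \<Longrightarrow> f = f' \<and> i = j"
  by (drule fun_cong[of _ _ f], drule fun_cong[of _ _ i]) (auto simp: tens_basis_apply split: if_splits)

lemma rep_tens_basis_inj:
  "Ob \<in> binom_set C c d \<Longrightarrow> Ob' \<in> binom_set C c d \<Longrightarrow> i < n \<Longrightarrow>
    tens_basis (orbit_rep Ob) i = tens_basis (orbit_rep Ob') j \<longleftrightarrow> Ob = Ob' \<and> i = j"
  using tens_basis_inj orbit_rep_inj by blast

lemma tens_eq_sum_tens_basis: "tens n f w = (\<Sum>j<n. tscale (w j) (tens_basis f j))"
proof (intro ext)
  fix f' i
  show "tens n f w f' i = (\<Sum>j<n. tscale (w j) (tens_basis f j)) f' i"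
  proof (cases "f' = f \<and> i < n")
    case True
    then have "(\<Sum>j<n. tscale (w j) (tens_basis f j)) f' i = (\<Sum>j<n. w j * (if j = i then 1 else 0))"
      by (simp add: sum_fun_apply2 tscale_apply tens_basis_apply eq_commute[of i])
    also have "\<dots> = w i" using True sum_mult_delta[of "{..<n}" w i] by simp
    finally show ?thesis using True by (simp add: tens_apply)
  qed (auto simp: sum_fun_apply2 tscale_apply tens_basis_apply tens_apply)
qed

lemma balance_rel_Id: "r \<in> Hom C c d \<Longrightarrow> balance_rel r (Id C c) w = 0"
  unfolding balance_rel_def by (intro ext) (simp add: tens_apply rep_act_Id)

lemma balance_rel_eq_sum: "balance_rel r h w = (\<Sum>j<n. tscale (w j) (balance_vec r h j))"
proof (intro ext)
  fix f' i
  have at_comp: "(\<Sum>j<n. w j * (if f' = Comp C r h \<and> i < n \<and> i = j then 1 else 0))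
      = (if f' = Comp C r h \<and> i < n then w i else 0)"
    using sum_mult_delta[of "{..<n}" w i] by (auto simp: eq_commute[of i])
  have at_rep: "(\<Sum>j<n. w j * (if f' = r \<and> i < n then rep_act n \<rho> h (unit_vec j) i else 0))
      = (if f' = r \<and> i < n then rep_act n \<rho> h w i else 0)"
  proof (cases "f' = r \<and> i < n")
    case True
    then have "(\<Sum>j<n. w j * rep_act n \<rho> h (unit_vec j) i) = (\<Sum>j<n. \<rho> h i j * w j)"
      using rep_act_unit_vec by (intro sum.cong) auto
    then show ?thesis using True by (simp add: rep_act_def)
  next
    case False
    then show ?thesis by (simp only: if_not_P[OF False] if_False mult_zero_right sum.neutral_const)
  qed
  show "balance_rel r h w f' i = (\<Sum>j<n. tscale (w j) (balance_vec r h j)) f' i"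
    by (simp add: balance_rel_def sum_fun_apply2 tscale_apply balance_vec_apply right_diff_distrib
        sum_subtractf at_comp at_rep tens_apply)
qed

text \<open>The cocycle identity that reduces every balancing relation to one based at an
  orbit representative.\<close>
lemma balance_rel_comp:
  assumes r: "r \<in> Hom C c d" and h: "h \<in> Hom C c c" and g: "g \<in> Hom C c c"
  shows "balance_rel (Comp C r h) g v = balance_rel r (Comp C h g) v - balance_rel r h (rep_act n \<rho> g v)"
  unfolding balance_rel_def using rep_act_comp[OF h g] r h g by (intro ext) (simp add: tens_apply)

lemma tens_basis_in_rep_basis: "Ob \<in> binom_set C c d \<Longrightarrow> j < n \<Longrightarrow> tens_basis (orbit_rep Ob) j \<in> rep_basis"
  unfolding rep_basis_def by auto

lemma balance_vec_in_balance_basis: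
  "Ob \<in> binom_set C c d \<Longrightarrow> g \<in> Hom C c c \<Longrightarrow> g \<noteq> Id C c \<Longrightarrow> j < n \<Longrightarrow>
    balance_vec (orbit_rep Ob) g j \<in> balance_basis"
  unfolding balance_basis_def by force

lemma rep_basis_subset: "rep_basis \<subseteq> tensor_basis"
  and balance_basis_subset: "balance_basis \<subseteq> tensor_basis"
  unfolding tensor_basis_def by auto

lemma finite_tensor_basis: "finite tensor_basis"
  unfolding tensor_basis_def rep_basis_def balance_basis_def by simp

lemma balance_vec_at_comp:
  assumes Ob: "Ob \<in> binom_set C c d" and g: "g \<in> Hom C c c" "g \<noteq> Id C c" and i: "i < n"
  shows "balance_vec (orbit_rep Ob) g i (Comp C (orbit_rep Ob) g) i = 1"
  using comp_orbit_rep_ne_rep[OF Ob Ob g] i by (simp add: balance_vec_apply)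

text \<open>The coordinate \<open>(r\<^sub>O \<circ> g, i)\<close> with \<open>g \<noteq> 1\<close> is nonzero for exactly one basis vector,
  which makes the basis triangular.\<close>
lemma tensor_basis_at_comp:
  assumes y: "y \<in> tensor_basis" and Ob: "Ob \<in> binom_set C c d"
    and g: "g \<in> Hom C c c" "g \<noteq> Id C c" and i: "i < n"
    and nz: "y (Comp C (orbit_rep Ob) g) i \<noteq> 0"
  shows "y = balance_vec (orbit_rep Ob) g i"
proof -
  from y consider (rep) "y \<in> rep_basis" | (bal) "y \<in> balance_basis"
    unfolding tensor_basis_def by blast
  then show ?thesis
  proof cases
    case rep
    then obtain Ob' j where "Ob' \<in> binom_set C c d" "y = tens_basis (orbit_rep Ob') j"
      unfolding rep_basis_def by auto
    then show ?thesis using nz comp_orbit_rep_ne_rep[OF Ob _ g]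
      by (auto simp: tens_basis_apply split: if_splits)
  next
    case bal
    then obtain Ob' g' j where Ob': "Ob' \<in> binom_set C c d" and g': "g' \<in> Hom C c c"
      and y: "y = balance_vec (orbit_rep Ob') g' j" unfolding balance_basis_def by auto
    have "Comp C (orbit_rep Ob) g = Comp C (orbit_rep Ob') g' \<and> i = j"
      using nz comp_orbit_rep_ne_rep[OF Ob Ob' g] unfolding y balance_vec_apply by (auto split: if_splits)
    then show ?thesis using Hom_decomp_unique[OF Ob Ob' g(1) g'] y by auto
  qed
qed

lemma balance_rep_basis_disjoint: "balance_basis \<inter> rep_basis = {}"
proof (rule ccontr)
  assume "balance_basis \<inter> rep_basis \<noteq> {}"
  then obtain x where x: "x \<in> balance_basis" "x \<in> rep_basis" by blast
  then obtain Ob g i where Ob: "Ob \<in> binom_set C c d" and g: "g \<in> Hom C c c" "g \<noteq> Id C c"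
    and i: "i < n" and x_eq: "x = balance_vec (orbit_rep Ob) g i"
    unfolding balance_basis_def by auto
  obtain Ob' j where Ob': "Ob' \<in> binom_set C c d" and x_eq': "x = tens_basis (orbit_rep Ob') j"
    using x unfolding rep_basis_def by auto
  have "x (Comp C (orbit_rep Ob) g) i = 1" using balance_vec_at_comp[OF Ob g i] x_eq by simp
  moreover have "x (Comp C (orbit_rep Ob) g) i = 0"
    using comp_orbit_rep_ne_rep[OF Ob Ob' g] x_eq' by (simp add: tens_basis_apply)
  ultimately show False by simp
qed

lemma tensor_basis_independent: "tscale.independent tensor_basis"
proof (rule tscale.independent_if_scalars_zero[OF finite_tensor_basis])
  fix a x assume S: "(\<Sum>x\<in>tensor_basis. tscale (a x) x) = 0" and x: "x \<in> tensor_basis"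
  have coord: "(\<Sum>y\<in>tensor_basis. a y * y f' i) = 0" for f' i
    using fun_cong[OF fun_cong[OF S, of f'], of i] by (simp add: sum_fun_apply2 tscale_apply)
  have balance_coeff: "a y = 0" if y: "y \<in> balance_basis" for y
  proof -
    obtain Ob g i where Ob: "Ob \<in> binom_set C c d" and g: "g \<in> Hom C c c" "g \<noteq> Id C c" and i: "i < n"
      and ye: "y = balance_vec (orbit_rep Ob) g i" using y unfolding balance_basis_def by auto
    have "(\<Sum>z\<in>tensor_basis. a z * z (Comp C (orbit_rep Ob) g) i) = a y * y (Comp C (orbit_rep Ob) g) i"
      using y balance_basis_subset tensor_basis_at_comp[OF _ Ob g i] ye
      by (intro sum_eq_single[OF finite_tensor_basis]) auto
    then show ?thesis using coord balance_vec_at_comp[OF Ob g i] ye by simp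
  qed
  show "a x = 0"
  proof (cases "x \<in> balance_basis")
    case False
    then obtain Ob i where Ob: "Ob \<in> binom_set C c d" and i: "i < n" and xe: "x = tens_basis (orbit_rep Ob) i"
      using x unfolding tensor_basis_def rep_basis_def by auto
    have "a z * z (orbit_rep Ob) i = 0" if z: "z \<in> tensor_basis" "z \<noteq> x" for z
    proof (cases "z \<in> balance_basis")
      case False
      then obtain Ob' j where "z = tens_basis (orbit_rep Ob') j"
        using z(1) False unfolding tensor_basis_def rep_basis_def by auto
      then show ?thesis using z(2) xe by (auto simp: tens_basis_apply)
    qed (simp add: balance_coeff)
    then have "(\<Sum>z\<in>tensor_basis. a z * z (orbit_rep Ob) i) = a x * x (orbit_rep Ob) i"
      by (intro sum_eq_single[OF finite_tensor_basis x])
    then show ?thesis using coord xe i by (simp add: tens_basis_apply)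
  qed (rule balance_coeff)
qed

lemma tensor_space_subspace: "tscale.subspace W"
  unfolding tscale.subspace_def tensor_space_def by (auto simp: tscale_def; metis add.left_neutral)

lemma tens_in_tensor_space: "f \<in> Hom C c d \<Longrightarrow> tens n f v \<in> W"
  unfolding tensor_space_def by (auto simp: tens_apply split: if_splits)

lemma tensor_basis_subset: "tensor_basis \<subseteq> W"
  unfolding tensor_basis_def balance_basis_def rep_basis_def balance_vec_def balance_rel_def tens_basis_def
  using orbit_rep(2) tens_in_tensor_space tscale.subspace_diff[OF tensor_space_subspace] by auto

lemma tens_rep_in_span: "Ob \<in> binom_set C c d \<Longrightarrow> tens n (orbit_rep Ob) w \<in> tscale.span tensor_basis"
  unfolding tens_eq_sum_tens_basis using tens_basis_in_rep_basis rep_basis_subset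
  by (intro tscale.span_sum tscale.span_scale tscale.span_base) auto

lemma balance_rel_rep_in_span:
  assumes Ob: "Ob \<in> binom_set C c d" and h: "h \<in> Hom C c c"
  shows "balance_rel (orbit_rep Ob) h w \<in> tscale.span balance_basis"
proof (cases "h = Id C c")
  case True
  then show ?thesis using balance_rel_Id[OF orbit_rep(2)[OF Ob]] tscale.span_zero by simp
next
  case False
  then show ?thesis unfolding balance_rel_eq_sum using balance_vec_in_balance_basis[OF Ob h False]
    by (intro tscale.span_sum tscale.span_scale tscale.span_base) auto
qed

lemma tens_in_span:
  assumes f: "f \<in> Hom C c d"
  shows "tens n f w \<in> tscale.span tensor_basis"
proof -
  obtain Ob h where Ob: "Ob \<in> binom_set C c d" and h: "h \<in> Hom C c c" and f_eq: "f = Comp C (orbit_rep Ob) h"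
    using Hom_decomp[OF f] by blast
  have "tens n f w = balance_rel (orbit_rep Ob) h w + tens n (orbit_rep Ob) (rep_act n \<rho> h w)"
    unfolding balance_rel_def f_eq by simp
  moreover have "balance_rel (orbit_rep Ob) h w \<in> tscale.span tensor_basis"
    using balance_rel_rep_in_span[OF Ob h] tscale.span_mono[OF balance_basis_subset] by blast
  ultimately show ?thesis using tscale.span_add tens_rep_in_span[OF Ob] by metis
qed

lemma tensor_space_eq_sum:
  assumes F: "F \<in> W"
  shows "F = (\<Sum>f\<in>Hom C c d. tens n f (F f))"
proof (intro ext)
  fix f' i
  have "(\<Sum>f\<in>Hom C c d. tens n f (F f)) f' i
      = (\<Sum>f\<in>Hom C c d. if f' = f then (if i < n then F f i else 0) else 0)"
    by (simp add: sum_fun_apply2 tens_apply)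
  also have "\<dots> = F f' i" using F unfolding tensor_space_def by auto
  finally show "F f' i = (\<Sum>f\<in>Hom C c d. tens n f (F f)) f' i" by simp
qed

lemma span_tensor_basis: "tscale.span tensor_basis = W"
proof
  show "tscale.span tensor_basis \<subseteq> W"
    using tscale.span_minimal[OF tensor_basis_subset tensor_space_subspace] .
  show "W \<subseteq> tscale.span tensor_basis"
  proof
    fix F assume F: "F \<in> W"
    have "F = (\<Sum>f\<in>Hom C c d. tens n f (F f))" by (rule tensor_space_eq_sum[OF F])
    also have "\<dots> \<in> tscale.span tensor_basis" by (intro tscale.span_sum tens_in_span)
    finally show "F \<in> tscale.span tensor_basis" .
  qed
qed

definition balance_gens :: "('m \<Rightarrow> nat \<Rightarrow> complex) set" where
  "balance_gens = {balance_rel f g v | f g v. f \<in> Hom C c d \<and> g \<in> Hom C c c}"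

lemma balance_space_eq_span: "K = tscale.span balance_gens"
  unfolding balance_space_def balance_gens_def balance_rel_def Aut_eq_Hom
  by (simp add: fun_diff_def)

lemma balance_gens_in_span: "balance_gens \<subseteq> tscale.span balance_basis"
proof
  fix x assume "x \<in> balance_gens"
  then obtain f g v where f: "f \<in> Hom C c d" and g: "g \<in> Hom C c c" and x: "x = balance_rel f g v"
    unfolding balance_gens_def by blast
  obtain Ob h where Ob: "Ob \<in> binom_set C c d" and h: "h \<in> Hom C c c" and f_eq: "f = Comp C (orbit_rep Ob) h"
    using Hom_decomp[OF f] by blast
  have "x = balance_rel (orbit_rep Ob) (Comp C h g) v - balance_rel (orbit_rep Ob) h (rep_act n \<rho> g v)"
    unfolding x f_eq using balance_rel_comp[OF orbit_rep(2)[OF Ob] h g] .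
  also have "\<dots> \<in> tscale.span balance_basis"
    using balance_rel_rep_in_span[OF Ob] h g by (intro tscale.span_diff) auto
  finally show "x \<in> tscale.span balance_basis" .
qed

lemma span_balance_basis: "tscale.span balance_basis = K"
proof
  have "balance_basis \<subseteq> balance_gens"
  proof
    fix x assume "x \<in> balance_basis"
    then obtain Ob g i where "Ob \<in> binom_set C c d" "g \<in> Hom C c c" "x = balance_vec (orbit_rep Ob) g i"
      unfolding balance_basis_def by auto
    then show "x \<in> balance_gens" unfolding balance_gens_def balance_vec_def using orbit_rep(2) by blast
  qed
  then show "tscale.span balance_basis \<subseteq> K"
    unfolding balance_space_eq_span by (rule tscale.span_mono)
  show "K \<subseteq> tscale.span balance_basis"
    unfolding balance_space_eq_span by (rule tscale.span_minimal[OF balance_gens_in_span]) simp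
qed

lemma representation_tens_rep:
  assumes Ob: "Ob \<in> binom_set C c d" and Ob': "Ob' \<in> binom_set C c d" and i: "i < n"
  shows "tscale.representation tensor_basis (tens n (orbit_rep Ob') v) (tens_basis (orbit_rep Ob) i)
       = (if Ob' = Ob then v i else 0)"
proof -
  have basis: "tens_basis (orbit_rep Ob') j \<in> tensor_basis" if "j < n" for j
    using tens_basis_in_rep_basis[OF Ob' that] rep_basis_subset by auto
  then have span: "tens_basis (orbit_rep Ob') j \<in> tscale.span tensor_basis" if "j < n" for j
    using that tscale.span_base by blast
  have "tscale.representation tensor_basis (tens n (orbit_rep Ob') v)
      = (\<lambda>b. \<Sum>j<n. tscale.representation tensor_basis (tscale (v j) (tens_basis (orbit_rep Ob') j)) b)"
    unfolding tens_eq_sum_tens_basis using span tscale.span_scale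
    by (intro tscale.representation_sum[OF tensor_basis_independent]) auto
  then have "tscale.representation tensor_basis (tens n (orbit_rep Ob') v) (tens_basis (orbit_rep Ob) i)
      = (\<Sum>j<n. v j * (if tens_basis (orbit_rep Ob) i = tens_basis (orbit_rep Ob') j then 1 else 0))"
    using tscale.representation_scale[OF tensor_basis_independent span]
      tscale.representation_basis[OF tensor_basis_independent basis] by simp
  also have "\<dots> = (\<Sum>j<n. v j * (if j = i then (if Ob' = Ob then 1 else 0) else 0))"
    using rep_tens_basis_inj[OF Ob Ob' i] by (intro sum.cong) auto
  also have "\<dots> = (if Ob' = Ob then v i else 0)"
    using sum_mult_delta[of "{..<n}" v i] i by (cases "Ob' = Ob") simp_all
  finally show ?thesis .
qed

lemma representation_tens_at_rep_basis:
  assumes Ob: "Ob \<in> binom_set C c d" and Ob': "Ob' \<in> binom_set C c d"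
    and h: "h \<in> Hom C c c" and i: "i < n"
  shows "tscale.representation tensor_basis (tens n (Comp C (orbit_rep Ob') h) v) (tens_basis (orbit_rep Ob) i)
       = (if Ob' = Ob then rep_act n \<rho> h v i else 0)"
proof -
  let ?x = "tens_basis (orbit_rep Ob) i" and ?R = "tscale.representation tensor_basis"
  have rel: "balance_rel (orbit_rep Ob') h v \<in> tscale.span balance_basis"
    by (rule balance_rel_rep_in_span[OF Ob' h])
  have "?x \<notin> balance_basis"
    using tens_basis_in_rep_basis[OF Ob i] balance_rep_basis_disjoint by auto
  then have rel_coeff: "?R (balance_rel (orbit_rep Ob') h v) ?x = 0"
    using tscale.representation_extend[OF tensor_basis_independent rel balance_basis_subset]
      tscale.representation_ne_zero by metis
  have "tens n (Comp C (orbit_rep Ob') h) v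
      = balance_rel (orbit_rep Ob') h v + tens n (orbit_rep Ob') (rep_act n \<rho> h v)"
    unfolding balance_rel_def by simp
  then have "?R (tens n (Comp C (orbit_rep Ob') h) v) ?x
      = ?R (balance_rel (orbit_rep Ob') h v) ?x + ?R (tens n (orbit_rep Ob') (rep_act n \<rho> h v)) ?x"
    using tscale.representation_add[OF tensor_basis_independent tens_rep_in_span[OF Ob']
        tscale.span_mono[OF balance_basis_subset, THEN subsetD, OF rel]] by simp
  then show ?thesis using rel_coeff representation_tens_rep[OF Ob Ob' i] by simp
qed

end

locale FI_induced = FI_tensor C c d n \<rho>
  for C :: "('o, 'm) cat" and c d :: 'o and n :: nat and \<rho> :: "'m \<Rightarrow> nat \<Rightarrow> nat \<Rightarrow> complex" +
  fixes \<sigma> :: 'm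
  assumes sigma: "\<sigma> \<in> Hom C d d"
begin

declare sigma [simp]

lemma sigma_assoc [simp]: "r \<in> Hom C c d \<Longrightarrow> b \<in> Hom C c c \<Longrightarrow>
    Comp C \<sigma> (Comp C r b) = Comp C (Comp C \<sigma> r) b"
  using comp_assoc[of b c c r d \<sigma> d] by simp

lemma cinv_sigma_cancel [simp]: "r \<in> Hom C c d \<Longrightarrow> Comp C (cinv C d \<sigma>) (Comp C \<sigma> r) = r"
  by (rule cinv_comp_cancel) simp_all

lemma sigma_cinv_cancel [simp]: "r \<in> Hom C c d \<Longrightarrow> Comp C \<sigma> (Comp C (cinv C d \<sigma>) r) = r"
  by (rule comp_cinv_cancel) simp_all

definition act_orbit :: "'m set \<Rightarrow> 'm set" where
  "act_orbit Ob = orbit (Comp C \<sigma> (orbit_rep Ob))"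

definition act_twist :: "'m set \<Rightarrow> 'm" where
  "act_twist Ob = (SOME h. h \<in> Hom C c c \<and>
     Comp C \<sigma> (orbit_rep Ob) = Comp C (orbit_rep (act_orbit Ob)) h)"

lemma act_orbit_in_binom_set: "Ob \<in> binom_set C c d \<Longrightarrow> act_orbit Ob \<in> binom_set C c d"
  using orbit_rep(2) by (simp add: act_orbit_def binom_set_eq)

lemma act_twist:
  assumes Ob: "Ob \<in> binom_set C c d"
  shows "act_twist Ob \<in> Hom C c c"
    and "Comp C \<sigma> (orbit_rep Ob) = Comp C (orbit_rep (act_orbit Ob)) (act_twist Ob)"
proof -
  have f: "Comp C \<sigma> (orbit_rep Ob) \<in> Hom C c d" using orbit_rep(2)[OF Ob] by simp
  have "Comp C \<sigma> (orbit_rep Ob) \<in> orbit (orbit_rep (act_orbit Ob))"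
    using orbit_rep(3)[OF act_orbit_in_binom_set[OF Ob]] orbit_self[OF f] by (simp add: act_orbit_def)
  then have "\<exists>h. h \<in> Hom C c c \<and> Comp C \<sigma> (orbit_rep Ob) = Comp C (orbit_rep (act_orbit Ob)) h"
    unfolding orbit_def by auto
  from someI_ex[OF this] show "act_twist Ob \<in> Hom C c c"
    and "Comp C \<sigma> (orbit_rep Ob) = Comp C (orbit_rep (act_orbit Ob)) (act_twist Ob)"
    unfolding act_twist_def by blast+
qed

definition fixed_up_to :: "'m set \<Rightarrow> 'm set \<Rightarrow> bool" where
  "fixed_up_to Ob \<mu> \<longleftrightarrow> (\<exists>f\<in>Ob. \<exists>\<psi>\<in>\<mu>. Comp C \<sigma> f = Comp C f \<psi>)"

definition twisted_trace :: complex where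
  "twisted_trace =
     (\<Sum>Ob\<in>binom_set C c d. if act_orbit Ob = Ob then rep_char n \<rho> (act_twist Ob) else 0)"

lemma fixed_up_to_imp_twist:
  assumes Ob: "Ob \<in> binom_set C c d" and mu: "\<mu> \<in> conj_classes C c" and fixed: "fixed_up_to Ob \<mu>"
  shows "act_orbit Ob = Ob" "act_twist Ob \<in> \<mu>"
proof -
  obtain a where a: "a \<in> Hom C c c" "\<mu> = conj_class a" using mu conj_classes_eq by auto
  obtain f \<psi> where f: "f \<in> Ob" and psi: "\<psi> \<in> \<mu>" and eq: "Comp C \<sigma> f = Comp C f \<psi>"
    using fixed unfolding fixed_up_to_def by blast
  define r where "r = orbit_rep Ob"
  have r: "r \<in> Hom C c d" using orbit_rep[OF Ob] r_def by simp
  obtain g where g: "g \<in> Hom C c c" "f = Comp C r g"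
    using f orbit_rep(3)[OF Ob] unfolding orbit_def r_def by auto
  have psi_G: "\<psi> \<in> Hom C c c" using psi a conj_class_subset by auto
  define h where "h = Comp C (Comp C g \<psi>) (cinv C c g)"
  have h: "h \<in> Hom C c c" using g psi_G h_def by simp
  have "Comp C r h = Comp C (Comp C (Comp C r g) \<psi>) (cinv C c g)"
    unfolding h_def using r g psi_G by simp
  also have "Comp C (Comp C r g) \<psi> = Comp C (Comp C \<sigma> r) g"
    using eq g r by simp
  also have "Comp C (Comp C (Comp C \<sigma> r) g) (cinv C c g) = Comp C \<sigma> r"
    using r g by simp
  finally have "Comp C r h = Comp C (orbit_rep (act_orbit Ob)) (act_twist Ob)"
    using act_twist(2)[OF Ob] r_def by simp
  then have twist: "Ob = act_orbit Ob" "h = act_twist Ob"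
    using Hom_decomp_unique[OF Ob act_orbit_in_binom_set[OF Ob] h act_twist(1)[OF Ob]] r_def by auto
  then show "act_orbit Ob = Ob" by simp
  have "h \<in> conj_class \<psi>" unfolding conj_class_def h_def using g by auto
  also have "conj_class \<psi> = \<mu>" using conj_class_eq[OF a(1)] psi a by simp
  finally show "act_twist Ob \<in> \<mu>" using twist by simp
qed

lemma fixed_up_to_twist_class:
  assumes Ob: "Ob \<in> binom_set C c d" and fixed: "act_orbit Ob = Ob"
  shows "fixed_up_to Ob (conj_class (act_twist Ob))"
  unfolding fixed_up_to_def
  using orbit_rep(1)[OF Ob] conj_class_self[OF act_twist(1)[OF Ob]] act_twist(2)[OF Ob] fixed by auto

lemma class_sum_at_orbit:
  assumes Ob: "Ob \<in> binom_set C c d"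
  shows "(\<Sum>\<mu>\<in>conj_classes C c. if fixed_up_to Ob \<mu> then class_val n \<rho> \<mu> else 0)
       = (if act_orbit Ob = Ob then rep_char n \<rho> (act_twist Ob) else 0)"
proof (cases "act_orbit Ob = Ob")
  case True
  define h where "h = act_twist Ob"
  have h: "h \<in> Hom C c c" using act_twist(1)[OF Ob] h_def by simp
  have class_h: "conj_class h \<in> conj_classes C c" using h conj_classes_eq by auto
  have "(\<Sum>\<mu>\<in>conj_classes C c. if fixed_up_to Ob \<mu> then class_val n \<rho> \<mu> else 0)
      = (if fixed_up_to Ob (conj_class h) then class_val n \<rho> (conj_class h) else 0)"
  proof (rule sum_eq_single[OF finite_conj_classes class_h])
    fix \<mu> assume mu: "\<mu> \<in> conj_classes C c" "\<mu> \<noteq> conj_class h"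
    show "(if fixed_up_to Ob \<mu> then class_val n \<rho> \<mu> else 0) = 0"
    proof (cases "fixed_up_to Ob \<mu>")
      case True
      then have "h \<in> \<mu>" using fixed_up_to_imp_twist[OF Ob mu(1)] h_def by simp
      moreover obtain a where "a \<in> Hom C c c" "\<mu> = conj_class a" using mu conj_classes_eq by auto
      ultimately have "conj_class h = \<mu>" using conj_class_eq by simp
      then show ?thesis using mu by simp
    qed simp
  qed
  also have "\<dots> = rep_char n \<rho> h"
    using fixed_up_to_twist_class[OF Ob True] h_def class_val_conj_class[OF h] by simp
  finally show ?thesis using True h_def by simp
next
  case False
  then have "(\<Sum>\<mu>\<in>conj_classes C c. if fixed_up_to Ob \<mu> then class_val n \<rho> \<mu> else 0) = 0"
    using fixed_up_to_imp_twist(1)[OF Ob] by (intro sum.neutral) auto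
  then show ?thesis using False by simp
qed

lemma class_sum_eq_twisted_trace:
  "(\<Sum>\<mu>\<in>conj_classes C c. class_val n \<rho> \<mu> * of_nat (binomX C c \<mu> d \<sigma>)) = twisted_trace"
proof -
  have binomX_eq: "of_nat (binomX C c \<mu> d \<sigma>)
      = (\<Sum>Ob\<in>binom_set C c d. if fixed_up_to Ob \<mu> then 1 else (0::complex))" for \<mu>
    unfolding binomX_def fixed_up_to_def
    using sum.inter_filter[OF finite_binom_set, of "\<lambda>_. 1::complex"] by simp
  have "(\<Sum>\<mu>\<in>conj_classes C c. class_val n \<rho> \<mu> * of_nat (binomX C c \<mu> d \<sigma>))
      = (\<Sum>\<mu>\<in>conj_classes C c. \<Sum>Ob\<in>binom_set C c d. if fixed_up_to Ob \<mu> then class_val n \<rho> \<mu> else 0)"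
    unfolding binomX_eq by (simp add: sum_distrib_left if_distrib cong: if_cong)
  also have "\<dots> = (\<Sum>Ob\<in>binom_set C c d. \<Sum>\<mu>\<in>conj_classes C c. if fixed_up_to Ob \<mu> then class_val n \<rho> \<mu> else 0)"
    by (rule sum.swap)
  also have "\<dots> = twisted_trace"
    unfolding twisted_trace_def by (rule sum.cong[OF refl]) (rule class_sum_at_orbit)
  finally show ?thesis .
qed

abbreviation "L \<equiv> post_act C c d \<sigma>"

lemma post_act_module_hom: "module_hom tscale tscale L"
  unfolding module_hom_iff using tscale.vector_space_axioms
  by (auto simp: module_iff_vector_space post_act_def tscale_def fun_eq_iff algebra_simps)

lemma post_act_tens:
  assumes f: "f \<in> Hom C c d"
  shows "L (tens n f v) = tens n (Comp C \<sigma> f) v"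
proof (intro ext)
  fix f' i
  have "f' \<in> Hom C c d \<and> Comp C (cinv C d \<sigma>) f' = f \<longleftrightarrow> f' = Comp C \<sigma> f"
    using f sigma_cinv_cancel[of f'] by auto
  then show "L (tens n f v) f' i = tens n (Comp C \<sigma> f) v f' i"
    unfolding post_act_def tens_apply by auto
qed

lemma post_act_balance_rel:
  assumes "f \<in> Hom C c d" and "g \<in> Hom C c c"
  shows "L (balance_rel f g v) = balance_rel (Comp C \<sigma> f) g v"
  unfolding balance_rel_def module_hom.diff[OF post_act_module_hom]
  using post_act_tens assms by simp

lemma post_act_tensor_space: "L ` W \<subseteq> W"
  unfolding tensor_space_def post_act_def by (auto split: if_splits)

lemma post_act_balance_space: "L ` K \<subseteq> K"
proof -
  have "L ` balance_gens \<subseteq> balance_gens"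
    unfolding balance_gens_def using post_act_balance_rel endo_comp_closed[OF sigma] by fastforce
  then show ?thesis
    unfolding balance_space_eq_span module_hom.span_image[OF post_act_module_hom, symmetric]
    by (rule tscale.span_mono)
qed

lemma diagonal_coeff_rep_basis:
  assumes Ob: "Ob \<in> binom_set C c d" and i: "i < n"
  shows "tscale.representation tensor_basis (L (tens_basis (orbit_rep Ob) i)) (tens_basis (orbit_rep Ob) i)
       = (if act_orbit Ob = Ob then \<rho> (act_twist Ob) i i else 0)"
proof -
  have "L (tens_basis (orbit_rep Ob) i) = tens n (Comp C (orbit_rep (act_orbit Ob)) (act_twist Ob)) (unit_vec i)"
    unfolding tens_basis_def using post_act_tens[OF orbit_rep(2)[OF Ob]] act_twist(2)[OF Ob] by simp
  then show ?thesis
    using representation_tens_at_rep_basis[OF Ob act_orbit_in_binom_set[OF Ob] act_twist(1)[OF Ob] i]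
      rep_act_unit_vec[OF i i] by simp
qed

lemma trace_rep_basis:
  "(\<Sum>b\<in>tensor_basis - balance_basis. tscale.representation tensor_basis (L b) b) = twisted_trace"
proof -
  have inj: "inj_on (\<lambda>(Ob, i). tens_basis (orbit_rep Ob) i) (binom_set C c d \<times> {..<n})"
    using rep_tens_basis_inj by (intro inj_onI) auto
  have "tensor_basis - balance_basis = rep_basis"
    unfolding tensor_basis_def using balance_rep_basis_disjoint by auto
  then have "(\<Sum>b\<in>tensor_basis - balance_basis. tscale.representation tensor_basis (L b) b)
      = (\<Sum>b\<in>rep_basis. tscale.representation tensor_basis (L b) b)" by simp
  also have "\<dots> = (\<Sum>(Ob, i)\<in>binom_set C c d \<times> {..<n}.
           tscale.representation tensor_basis (L (tens_basis (orbit_rep Ob) i)) (tens_basis (orbit_rep Ob) i))"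
    unfolding rep_basis_def sum.reindex[OF inj] by (simp add: case_prod_unfold)
  also have "\<dots> = (\<Sum>Ob\<in>binom_set C c d. \<Sum>i<n.
           tscale.representation tensor_basis (L (tens_basis (orbit_rep Ob) i)) (tens_basis (orbit_rep Ob) i))"
    by (rule sum.cartesian_product[symmetric])
  also have "\<dots> = twisted_trace"
    unfolding twisted_trace_def rep_char_def by (intro sum.cong refl) (simp add: diagonal_coeff_rep_basis)
  finally show ?thesis .
qed

lemma Ind_char_eq_twisted_trace: "Ind_char C c n \<rho> d \<sigma> = twisted_trace"
proof -
  have "Ind_char C c n \<rho> d \<sigma> = (\<Sum>b\<in>tensor_basis - balance_basis. tscale.representation tensor_basis (L b) b)"
    unfolding Ind_char_def quot_trace_def
    by (rule tscale.quotient_trace_eq_diagonal_sum[OF finite_tensor_basis tensor_basis_independent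
          balance_basis_subset span_balance_basis span_tensor_basis post_act_module_hom
          post_act_tensor_space post_act_balance_space])
  then show ?thesis using trace_rep_basis by simp
qed

end

theorem mainTheorem7:
  fixes C :: "('o, 'm) cat" and c d :: 'o and n :: nat
    and \<rho> :: "'m \<Rightarrow> nat \<Rightarrow> nat \<Rightarrow> complex" and \<sigma> :: 'm
  assumes "FI_type C"
    and "is_matrep C c n \<rho>"
    and "\<sigma> \<in> Aut C d"
  shows "Ind_char C c n \<rho> d \<sigma> =
           (\<Sum>\<mu> \<in> conj_classes C c. class_val n \<rho> \<mu> * of_nat (binomX C c \<mu> d \<sigma>))"
proof -
  interpret FI_category C by unfold_locales (rule assms(1))
  interpret FI_induced C c d n \<rho> \<sigma>
    by unfold_locales (use assms Aut_eq_Hom in auto)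
  show ?thesis using Ind_char_eq_twisted_trace class_sum_eq_twisted_trace by simp
qed

end
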